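(* Let $A\in\mathbb{R}^{m\times m}$ be symmetric, $B\in\mathbb{R}^{m\times k}$ with $k\le m$, and consider the quadratic problem on the Stiefel manifold $$\min_{W\in\mathbb{R}^{m\times k},\ W^TW=I_k} f(W),\qquad f(W)=\operatorname{Tr}(W^TAW-2W^TB).$$ Run the generalized power iteration method (GPI) described below. Then the algorithm decreases the value of $f$ monotonically in each iteration until it converges; that is, if $W$ is the current iterate and $\tilde{W}$ is the updated iterate, then $f(\tilde{W})\le f(W)$.
   Context: The generalized power iteration method (GPI) for this problem is: (1) Choose a constant $\alpha$ such that $\tilde{A}=\alpha I_m-A$ is positive definite, and choose an (arbitrary, e.g. random) initial $W\in\mathbb{R}^{m\times k}$ with $W^TW=I_k$. (2) Set $M\leftarrow 2\tilde{A}W+2B\in\mathbb{R}^{m\times k}$. (3) Compute a compact singular value decomposition $M=USV^T$ with $U\in\mathbb{R}^{m\times k}$ having orthonormal columns, $S\in\mathbb{R}^{k\times k}$ diagonal with nonnegative entries, and $V\in\mathbb{R}^{k\times k}$ orthogonal. (4) Update $W\leftarrow UV^T$. (5) Repeat steps (2)–(4) until convergence. $I_k$ denotes the $k\times k$ identity matrix and $\operatorname{Tr}$ the trace. *)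

theory Defs
  imports "HOL-Analysis.Analysis"
begin

definition stiefel_obj :: "real^'m^'m \<Rightarrow> real^'k^'m \<Rightarrow> real^'k^'m \<Rightarrow> real" where
  "stiefel_obj A B W = trace (transpose W ** A ** W - 2 *\<^sub>R (transpose W ** B))"

definition pos_def_mat :: "real^'n^'n \<Rightarrow> bool" where
  "pos_def_mat X \<longleftrightarrow> transpose X = X \<and> (\<forall>x. x \<noteq> 0 \<longrightarrow> x \<bullet> (X *v x) > 0)"

definition diagonal_mat :: "real^'n^'n \<Rightarrow> bool" where
  "diagonal_mat S \<longleftrightarrow> (\<forall>i j. i \<noteq> j \<longrightarrow> S $ i $ j = 0)"

end

theory Submission
  imports Defs
begin

text \<open>
  Put \<open>T = \<alpha> I - A\<close>. On the Stiefel manifold \<open>f X = \<alpha> k - Tr(X\<^sup>T T X) - 2 Tr(X\<^sup>T B)\<close>,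
  and since \<open>T\<close> is positive semidefinite the concave term \<open>-Tr(X\<^sup>T T X)\<close> lies below its
  tangent at the current iterate \<open>W\<close>. Hence \<open>f X \<le> g X\<close> with the affine majorant
  \<open>g X = \<alpha> k + Tr(W\<^sup>T T W) - Tr(X\<^sup>T M)\<close>, \<open>M = 2 T W + 2 B\<close>, and \<open>f W = g W\<close>.
  The GPI update maximises \<open>Tr(X\<^sup>T M)\<close> over the Stiefel manifold: for \<open>M = U S V\<^sup>T\<close> it
  attains \<open>Tr S\<close>, whereas every \<open>X\<close> gives \<open>Tr(S (X V)\<^sup>T U) \<le> Tr S\<close>, because the diagonal
  entries of \<open>(X V)\<^sup>T U\<close> are inner products of unit vectors.
  Therefore \<open>f W' \<le> g W' \<le> g W = f W\<close>.
\<close>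

lemma matrix_diff_ldistrib: "(A::'a::ring_1^'n^'m) ** (B - C) = A ** B - A ** C"
  by (simp add: matrix_matrix_mult_def vec_eq_iff sum_subtractf algebra_simps)

lemma matrix_diff_rdistrib: "((A::'a::ring_1^'n^'m) - B) ** C = A ** C - B ** C"
  by (simp add: matrix_matrix_mult_def vec_eq_iff sum_subtractf algebra_simps)

lemma trace_scaleR: "trace (c *\<^sub>R (A::real^'n^'n)) = c * trace A"
  by (simp add: trace_def sum_distrib_left)

lemma trace_mult_scaleR_right: "trace ((A::real^'n^'m) ** (c *\<^sub>R B)) = c * trace (A ** B)"
  by (simp add: matrix_scalar_ac flip: scalar_matrix_assoc add: trace_scaleR)

lemma trace_transpose: "trace (transpose A) = trace A"
  by (simp add: trace_def transpose_def)

lemma transpose_diff: "transpose ((A::'a::ab_group_add^'n^'m) - B) = transpose A - transpose B"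
  by (simp add: transpose_def vec_eq_iff)

lemma trace_bilinear_swap:
  fixes A :: "'a::comm_semiring_1^'k^'m" and T :: "'a^'n^'m" and B :: "'a^'k^'n"
  shows "trace (transpose A ** T ** B) = trace (transpose B ** transpose T ** A)"
  by (metis trace_transpose matrix_transpose_mul transpose_transpose matrix_mul_assoc)

lemma pos_def_mat_quadratic_nonneg: "pos_def_mat T \<Longrightarrow> 0 \<le> x \<bullet> (T *v x)"
  unfolding pos_def_mat_def by (metis inner_zero_left less_eq_real_def)

lemma trace_congruence_nonneg:
  fixes T :: "real^'m^'m" and D :: "real^'k^'m"
  assumes "\<And>x. 0 \<le> x \<bullet> (T *v x)"
  shows "0 \<le> trace (transpose D ** T ** D)"
proof -
  have "trace (transpose D ** T ** D) = (\<Sum>j\<in>UNIV. column j D \<bullet> (T *v column j D))"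
    by (simp add: trace_def matrix_matrix_mult_def matrix_vector_mult_def inner_vec_def
        column_def transpose_def sum_distrib_left sum_distrib_right algebra_simps)
       (rule sum.cong[OF refl], subst sum.swap, simp add: mult_ac)
  then show ?thesis
    by (simp add: assms sum_nonneg)
qed

lemma trace_congruence_tangent_le:
  fixes T :: "real^'m^'m" and X W :: "real^'k^'m"
  assumes "transpose T = T" and "\<And>x. 0 \<le> x \<bullet> (T *v x)"
  shows "2 * trace (transpose X ** T ** W) - trace (transpose W ** T ** W)
           \<le> trace (transpose X ** T ** X)"
proof -
  have "0 \<le> trace (transpose (X - W) ** T ** (X - W))"
    by (rule trace_congruence_nonneg[OF assms(2)])
  also have "\<dots> = trace (transpose X ** T ** X) - 2 * trace (transpose X ** T ** W)
                   + trace (transpose W ** T ** W)"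
    using trace_bilinear_swap[of W T X]
    by (simp add: assms(1) transpose_diff matrix_diff_ldistrib matrix_diff_rdistrib trace_sub)
  finally show ?thesis
    by linarith
qed

lemma orthonormal_columns_mult_orthogonal:
  fixes U :: "real^'k^'m" and V :: "real^'k^'k"
  assumes "transpose U ** U = mat 1" and "orthogonal_matrix V"
  shows "transpose (U ** V) ** (U ** V) = mat 1"
proof -
  have "transpose (U ** V) ** (U ** V) = transpose V ** (transpose U ** U) ** V"
    by (simp add: matrix_transpose_mul matrix_mul_assoc)
  with assms show ?thesis
    by (simp add: orthogonal_matrix_def)
qed

lemma orthonormal_columns_diag_le_1:
  fixes X Y :: "real^'k^'m"
  assumes "transpose X ** X = mat 1" and "transpose Y ** Y = mat 1"
  shows "(transpose X ** Y) $ i $ i \<le> 1"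
proof -
  have unit: "norm (column i Z) = 1" if "transpose Z ** Z = mat 1" for Z :: "real^'k^'m"
    using arg_cong[OF that, of "\<lambda>M. M $ i $ i"]
    by (simp add: matrix_mult_transpose_dot_column mat_def norm_eq_sqrt_inner)
  have "(transpose X ** Y) $ i $ i = column i X \<bullet> column i Y"
    by (simp add: matrix_matrix_mult_def transpose_def column_def inner_vec_def)
  also have "\<dots> \<le> norm (column i X) * norm (column i Y)"
    by (rule norm_cauchy_schwarz)
  finally show ?thesis
    using unit assms by simp
qed

lemma trace_diagonal_mult_le:
  fixes S P :: "real^'k^'k"
  assumes "diagonal_mat S" and "\<And>i. 0 \<le> S $ i $ i" and "\<And>i. P $ i $ i \<le> 1"
  shows "trace (S ** P) \<le> trace S"
proof -
  have "(S ** P) $ i $ i = S $ i $ i * P $ i $ i" for i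
  proof -
    have "(S ** P) $ i $ i = (\<Sum>l\<in>UNIV. S $ i $ l * P $ l $ i)"
      by (simp add: matrix_matrix_mult_def)
    also have "\<dots> = (\<Sum>l\<in>{i}. S $ i $ l * P $ l $ i)"
      using assms(1) unfolding diagonal_mat_def by (intro sum.mono_neutral_right) auto
    finally show ?thesis
      by simp
  qed
  then have "trace (S ** P) = (\<Sum>i\<in>UNIV. S $ i $ i * P $ i $ i)"
    by (simp add: trace_def)
  also have "\<dots> \<le> (\<Sum>i\<in>UNIV. S $ i $ i)"
    using assms(2,3) by (intro sum_mono) (simp add: mult_left_le)
  finally show ?thesis
    by (simp add: trace_def)
qed

lemma procrustes_trace_le:
  fixes W U :: "real^'k^'m" and S V :: "real^'k^'k"
  assumes "transpose W ** W = mat 1" and "transpose U ** U = mat 1"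
    and "diagonal_mat S" and "\<And>i. 0 \<le> S $ i $ i" and "orthogonal_matrix V"
  shows "trace (transpose W ** (U ** S ** transpose V))
           \<le> trace (transpose (U ** transpose V) ** (U ** S ** transpose V))"
proof -
  have "trace (transpose W ** (U ** S ** transpose V))
          = trace (S ** (transpose V ** transpose W ** U))"
    by (metis trace_mul_sym matrix_mul_assoc)
  also have "\<dots> = trace (S ** (transpose (W ** V) ** U))"
    by (simp add: matrix_transpose_mul)
  also have "\<dots> \<le> trace S"
    using orthonormal_columns_diag_le_1[OF orthonormal_columns_mult_orthogonal[OF assms(1,5)] assms(2)]
    by (intro trace_diagonal_mult_le assms(3,4))
  also have "\<dots> = trace (S ** (transpose V ** V))"
    using assms(5) by (simp add: orthogonal_matrix_def)
  also have "\<dots> = trace (transpose (U ** transpose V) ** (U ** S ** transpose V))"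
    using assms(2)
    by (simp add: matrix_transpose_mul matrix_mul_assoc)
       (metis trace_mul_sym matrix_mul_assoc matrix_mul_lid)
  finally show ?thesis .
qed

lemma stiefel_obj_on_stiefel:
  fixes A :: "real^'m^'m" and B X :: "real^'k^'m" and \<alpha> :: real
  assumes "transpose X ** X = mat 1"
  shows "stiefel_obj A B X = \<alpha> * CARD('k) - trace (transpose X ** (\<alpha> *\<^sub>R mat 1 - A) ** X)
                               - 2 * trace (transpose X ** B)"
proof -
  have "transpose X ** (\<alpha> *\<^sub>R mat 1 - A) ** X = \<alpha> *\<^sub>R (transpose X ** X) - transpose X ** A ** X"
    by (simp add: matrix_diff_ldistrib matrix_diff_rdistrib matrix_scalar_ac scalar_matrix_assoc)
  with assms show ?thesis
    unfolding stiefel_obj_def by (simp add: trace_sub trace_scaleR trace_I)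
qed

lemma stiefel_obj_le_majorant:
  fixes A :: "real^'m^'m" and B X W :: "real^'k^'m" and \<alpha> :: real
  defines "T \<equiv> \<alpha> *\<^sub>R mat 1 - A"
  assumes "pos_def_mat T" and "transpose X ** X = mat 1"
  shows "stiefel_obj A B X \<le> \<alpha> * CARD('k) + trace (transpose W ** T ** W)
                              - trace (transpose X ** (2 *\<^sub>R (T ** W) + 2 *\<^sub>R B))"
proof -
  have "transpose T = T"
    using assms(2) unfolding pos_def_mat_def by simp
  then have "2 * trace (transpose X ** T ** W) - trace (transpose W ** T ** W)
               \<le> trace (transpose X ** T ** X)"
    using pos_def_mat_quadratic_nonneg[OF assms(2)] by (rule trace_congruence_tangent_le)
  then show ?thesis
    using stiefel_obj_on_stiefel[OF assms(3), of A B \<alpha>]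
    by (simp add: T_def matrix_add_ldistrib trace_add trace_mult_scaleR_right matrix_mul_assoc)
qed

lemma stiefel_obj_eq_majorant:
  fixes A :: "real^'m^'m" and B W :: "real^'k^'m" and \<alpha> :: real
  defines "T \<equiv> \<alpha> *\<^sub>R mat 1 - A"
  assumes "transpose W ** W = mat 1"
  shows "stiefel_obj A B W = \<alpha> * CARD('k) + trace (transpose W ** T ** W)
                              - trace (transpose W ** (2 *\<^sub>R (T ** W) + 2 *\<^sub>R B))"
  using stiefel_obj_on_stiefel[OF assms(2), of A B \<alpha>]
  by (simp add: T_def matrix_add_ldistrib trace_add trace_mult_scaleR_right matrix_mul_assoc)

theorem theorem2:
  fixes A :: "real^'m^'m" and B W U :: "real^'k^'m"
    and S V :: "real^'k^'k" and \<alpha> :: real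
  assumes "transpose A = A"
    and "CARD('k) \<le> CARD('m)"
    and "pos_def_mat (\<alpha> *\<^sub>R mat 1 - A)"
    and "transpose W ** W = mat 1"
    and "2 *\<^sub>R ((\<alpha> *\<^sub>R mat 1 - A) ** W) + 2 *\<^sub>R B = U ** S ** transpose V"
    and "transpose U ** U = mat 1"
    and "diagonal_mat S" and "\<forall>i. S $ i $ i \<ge> 0"
    and "orthogonal_matrix V"
  shows "stiefel_obj A B (U ** transpose V) \<le> stiefel_obj A B W"
proof -
  let ?T = "\<alpha> *\<^sub>R mat 1 - A" and ?M = "U ** S ** transpose V"
  have "transpose (U ** transpose V) ** (U ** transpose V) = mat 1"
    using assms(6,9) by (simp add: orthonormal_columns_mult_orthogonal)
  then have "stiefel_obj A B (U ** transpose V)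
               \<le> \<alpha> * CARD('k) + trace (transpose W ** ?T ** W) - trace (transpose (U ** transpose V) ** ?M)"
    using stiefel_obj_le_majorant[OF assms(3)] assms(5) by metis
  also have "\<dots> \<le> \<alpha> * CARD('k) + trace (transpose W ** ?T ** W) - trace (transpose W ** ?M)"
    using procrustes_trace_le[OF assms(4,6,7) _ assms(9)] assms(8) by simp
  also have "\<dots> = stiefel_obj A B W"
    using stiefel_obj_eq_majorant[OF assms(4)] assms(5) by metis
  finally show ?thesis .
qed

end
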